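(* For all real $(B,A)$ with $A\neq0$ (and $l=B/\omega\ge0$, $\mu=A/(2\omega)>0$), the unimodular normalized monodromy matrix $\widetilde M=e^{\pi il}M$ has real trace; equivalently $\operatorname{tr}\widetilde M=2\cos(\pi l)+e^{\pi il}c_0c_1\in\mathbb R$, i.e. $e^{\pi il}c_0c_1\in\mathbb R$.
   Context: Fix $\omega>0$; $l=B/\omega$, $\mu=A/(2\omega)$. System (L): $u'=z^{-2}\big(-(lz+\mu(1+z^2))u+\frac{z}{2i\omega}v\big)$, $v'=\frac{1}{2i\omega z}u$. Its projectivization $\Phi=v/u$ is the complexification (via $\Phi=e^{i\phi}$, $z=e^{i\tau}$) of $\frac{d\phi}{d\tau}=-\frac{\sin\phi}{\omega}+l+2\mu\cos\tau$. $F(z)=\operatorname{diag}(z^{-l}e^{\mu(1/z-z)},1)$; $S_\pm$ are sectors with vertex $0$ containing the closed upper/lower half-plane minus $0$, closures avoiding $i\mathbb R_\mp$, $S_-=\overline{S_+}$; $H_\pm$ are the unique invertible matrix functions holomorphic on $S_\pm$, $C^\infty$ on $\overline{S_\pm}\setminus\{\infty\}$, $H_\pm(0)=\mathrm{Id}$, transforming (L) into $\tilde u'=-z^{-2}(lz+\mu(1+z^2))\tilde u$, $\tilde v'=0$; $W_\pm=H_\pm F$ (branch on $S_-$ by counterclockwise continuation from $S_+$), $W_{+,1}=H_+F$ with branch continued counterclockwise from $S_-$. With $\Sigma_0\ni\mathbb R_-$, $\Sigma_1\ni\mathbb R_+$ the components of $S_+\cap S_-$: $W_-=W_+C_0$ on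 $\Sigma_0$, $W_{+,1}=W_-C_1$ on $\Sigma_1$, $C_0=\begin{pmatrix}1&c_0\\0&1\end{pmatrix}$, $C_1=\begin{pmatrix}1&0\\c_1&1\end{pmatrix}$. $M_N=\operatorname{diag}(e^{-2\pi il},1)$. The monodromy matrix of (L) along a counterclockwise circuit around $0$, in the basis $W_+$, is $M=M_NC_1^{-1}C_0^{-1}$, and $\widetilde M=e^{\pi il}M$. *)

theory Defs
  imports "HOL-Analysis.Analysis"
begin

definition Lmat :: "real \<Rightarrow> real \<Rightarrow> real \<Rightarrow> complex \<Rightarrow> complex^2^2" where
  "Lmat \<omega> l \<mu> z =
     vector [vector [ - (of_real l * z + of_real \<mu> * (1 + z^2)) / z^2,
                      1 / (2 * \<i> * of_real \<omega> * z)],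
             vector [ 1 / (2 * \<i> * of_real \<omega> * z), 0]]"

text \<open>Y is a fundamental matrix solution of (L) lifted to the universal cover of
  C - {0} via z = exp zeta (columns are solutions; dY/dzeta = exp zeta * L(exp zeta) Y).\<close>
definition fundamental_solution_L :: "real \<Rightarrow> real \<Rightarrow> real \<Rightarrow> (complex \<Rightarrow> complex^2^2) \<Rightarrow> bool" where
  "fundamental_solution_L \<omega> l \<mu> Y \<longleftrightarrow>
     (\<forall>\<zeta> i j. ((\<lambda>t. Y t $ i $ j) has_field_derivative
                   (exp \<zeta> * ((Lmat \<omega> l \<mu> (exp \<zeta>) ** Y \<zeta>) $ i $ j))) (at \<zeta>))
     \<and> (\<forall>\<zeta>. det (Y \<zeta>) \<noteq> 0)"

text \<open>M is the monodromy matrix of (L) along a counterclockwise circuit around 0 in the basis Y: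
  continuing Y once counterclockwise (zeta \<mapsto> zeta + 2 pi i) gives Y M.\<close>
definition is_monodromy_L :: "real \<Rightarrow> real \<Rightarrow> real \<Rightarrow> (complex \<Rightarrow> complex^2^2) \<Rightarrow> complex^2^2 \<Rightarrow> bool" where
  "is_monodromy_L \<omega> l \<mu> Y M \<longleftrightarrow>
     fundamental_solution_L \<omega> l \<mu> Y \<and> (\<forall>\<zeta>. Y (\<zeta> + 2 * of_real pi * \<i>) = Y \<zeta> ** M)"

definition normalized_monodromy :: "real \<Rightarrow> complex^2^2 \<Rightarrow> complex^2^2" where
  "normalized_monodromy l M = mat (exp (of_real pi * \<i> * of_real l)) ** M"

end

theory Submission
  imports Defs
begin

text \<open>Substituting \<open>z = exp \<zeta>\<close> makes (L) a linear system \<open>Y' = P(\<zeta>) Y\<close> on \<open>\<complex>\<close> whose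
  coefficient matrix satisfies \<open>C \<cdot> conj (P (conj \<zeta>)) \<cdot> C = P \<zeta>\<close> for \<open>C = diag(1,-1)\<close>.
  Hence \<open>\<zeta> \<mapsto> C \<cdot> conj (Y (conj \<zeta>))\<close> is again a fundamental matrix, equal to \<open>Y K\<close> for a
  constant invertible \<open>K\<close>; since \<open>conj (2\<pi>i) = -2\<pi>i\<close>, comparing monodromies gives
  \<open>M K conj M = K\<close>. For \<open>2\<times>2\<close> matrices this forces \<open>tr M = det M \<cdot> conj (tr M)\<close>, and
  Liouville's formula gives \<open>det M = exp(-2\<pi>i l)\<close>, so \<open>exp(\<pi>i l) tr M\<close> is its own conjugate.\<close>

definition matrix_ode_solution ::
    "(complex \<Rightarrow> complex^'n^'n) \<Rightarrow> (complex \<Rightarrow> complex^'m^'n) \<Rightarrow> bool" where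
  "matrix_ode_solution P Y \<longleftrightarrow>
     (\<forall>\<zeta> i j. ((\<lambda>t. Y t $ i $ j) has_field_derivative (P \<zeta> ** Y \<zeta>) $ i $ j) (at \<zeta>))"

definition cnj_matrix :: "complex^'n^'m \<Rightarrow> complex^'n^'m" where
  "cnj_matrix A = (\<chi> i j. cnj (A $ i $ j))"

definition wronskian :: "'a::comm_ring^2 \<Rightarrow> 'a^2 \<Rightarrow> 'a" where
  "wronskian u v = u $ 1 * v $ 2 - u $ 2 * v $ 1"

lemma cnj_matrix_mult: "cnj_matrix (A ** B) = cnj_matrix A ** cnj_matrix B"
  by (simp add: cnj_matrix_def matrix_matrix_mult_def vec_eq_iff)

lemma det_cnj_matrix: "det (cnj_matrix A) = cnj (det A)"
  by (simp add: det_def cnj_matrix_def)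

lemma trace_cnj_matrix: "trace (cnj_matrix A) = cnj (trace A)"
  by (simp add: trace_def cnj_matrix_def)

lemma matrix_ode_solution_reflect:
  fixes P :: "complex \<Rightarrow> complex^'n^'n" and C :: "complex^'n^'n"
  assumes Y: "matrix_ode_solution P Y" and C: "C ** C = mat 1"
    and sym: "\<And>\<zeta>. C ** cnj_matrix (P (cnj \<zeta>)) ** C = P \<zeta>"
  shows "matrix_ode_solution P (\<lambda>\<zeta>. C ** cnj_matrix (Y (cnj \<zeta>)))"
  unfolding matrix_ode_solution_def
proof (intro allI)
  fix \<zeta> i j
  have CC: "C ** (C ** X) = X" for X :: "complex^'m^'n"
    by (simp add: matrix_mul_assoc C)
  have deriv: "((\<lambda>t. cnj (Y (cnj t) $ k $ j)) has_field_derivative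
      cnj ((P (cnj \<zeta>) ** Y (cnj \<zeta>)) $ k $ j)) (at \<zeta>)" for k
    using has_field_derivative_cnj_cnj[of "\<lambda>t. Y t $ k $ j"] Y
    by (simp add: matrix_ode_solution_def o_def)
  have "P \<zeta> ** (C ** cnj_matrix (Y (cnj \<zeta>)))
      = C ** cnj_matrix (P (cnj \<zeta>)) ** C ** (C ** cnj_matrix (Y (cnj \<zeta>)))"
    by (simp add: sym)
  also have "\<dots> = C ** cnj_matrix (P (cnj \<zeta>) ** Y (cnj \<zeta>))"
    by (simp only: cnj_matrix_mult matrix_mul_assoc[symmetric] CC)
  finally have "(P \<zeta> ** (C ** cnj_matrix (Y (cnj \<zeta>)))) $ i $ j
      = (\<Sum>k\<in>UNIV. C $ i $ k * cnj ((P (cnj \<zeta>) ** Y (cnj \<zeta>)) $ k $ j))"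
    by (simp only: matrix_matrix_mult_def[of C] cnj_matrix_def vec_lambda_beta)
  moreover have "(\<lambda>t. (C ** cnj_matrix (Y (cnj t))) $ i $ j)
      = (\<lambda>t. \<Sum>k\<in>UNIV. C $ i $ k * cnj (Y (cnj t) $ k $ j))"
    by (simp add: matrix_matrix_mult_def cnj_matrix_def)
  ultimately show "((\<lambda>t. (C ** cnj_matrix (Y (cnj t))) $ i $ j) has_field_derivative
      (P \<zeta> ** (C ** cnj_matrix (Y (cnj \<zeta>)))) $ i $ j) (at \<zeta>)"
    by (simp only:) (intro DERIV_sum DERIV_cmult deriv)
qed

lemma reflect_monodromy:
  assumes "\<And>\<zeta>. Y (\<zeta> + p) = Y \<zeta> ** M" and "cnj p = - p"
  shows "C ** cnj_matrix (Y (cnj \<zeta>)) = C ** cnj_matrix (Y (cnj (\<zeta> + p))) ** cnj_matrix M"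
  using assms(1)[of "cnj \<zeta> - p"] assms(2) by (simp add: cnj_matrix_mult matrix_mul_assoc)

lemma det_eq_wronskian_columns: "det A = wronskian (column 1 A) (column 2 A)"
  by (simp add: det_2 wronskian_def column_def mult.commute)

lemma wronskian_cramer: "wronskian u v *s w = wronskian w v *s u + wronskian u w *s v"
  for u v w :: "'a::comm_ring^2"
  by (simp add: vec_eq_iff forall_2 wronskian_def algebra_simps)

lemma wronskian_columns_deriv:
  fixes P :: "complex \<Rightarrow> complex^2^2"
  assumes Y: "matrix_ode_solution P Y" and Z: "matrix_ode_solution P Z"
  shows "((\<lambda>t. wronskian (column a (Y t)) (column b (Z t))) has_field_derivative
      trace (P \<zeta>) * wronskian (column a (Y \<zeta>)) (column b (Z \<zeta>))) (at \<zeta>)"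
proof -
  have "((\<lambda>t. Y t $ i $ a) has_field_derivative (P \<zeta> ** Y \<zeta>) $ i $ a) (at \<zeta>)"
    and "((\<lambda>t. Z t $ i $ b) has_field_derivative (P \<zeta> ** Z \<zeta>) $ i $ b) (at \<zeta>)" for i
    using Y Z by (auto simp: matrix_ode_solution_def)
  then show ?thesis
    unfolding wronskian_def column_def vec_lambda_beta
    by (auto intro!: derivative_eq_intros
        simp: matrix_matrix_mult_def sum_2 trace_def algebra_simps)
qed

lemma proportional_if_same_linear_ode:
  fixes f g :: "complex \<Rightarrow> complex"
  assumes f: "\<And>\<zeta>. (f has_field_derivative a \<zeta> * f \<zeta>) (at \<zeta>)"
    and g: "\<And>\<zeta>. (g has_field_derivative a \<zeta> * g \<zeta>) (at \<zeta>)" and g0: "\<And>\<zeta>. g \<zeta> \<noteq> 0"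
  shows "\<exists>c. \<forall>\<zeta>. f \<zeta> = c * g \<zeta>"
proof -
  have "((\<lambda>t. f t / g t) has_field_derivative 0) (at \<zeta>)" for \<zeta>
    using g0[of \<zeta>]
    by (auto intro!: derivative_eq_intros f g simp: power2_eq_square algebra_simps)
  then obtain c where "\<And>\<zeta>. f \<zeta> / g \<zeta> = c"
    using has_field_derivative_zero_constant[of UNIV "\<lambda>t. f t / g t"] by auto
  then show ?thesis
    using g0 by (metis nonzero_eq_divide_eq)
qed

lemma matrix_ode_det_exp:
  fixes P :: "complex \<Rightarrow> complex^2^2"
  assumes Y: "matrix_ode_solution P Y"
    and G: "\<And>\<zeta>. (G has_field_derivative trace (P \<zeta>)) (at \<zeta>)"
  shows "\<exists>c. \<forall>\<zeta>. det (Y \<zeta>) = c * exp (G \<zeta>)"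
proof (rule proportional_if_same_linear_ode)
  show "((\<lambda>t. det (Y t)) has_field_derivative trace (P \<zeta>) * det (Y \<zeta>)) (at \<zeta>)" for \<zeta>
    unfolding det_eq_wronskian_columns by (rule wronskian_columns_deriv[OF Y Y])
  show "((\<lambda>t. exp (G t)) has_field_derivative trace (P \<zeta>) * exp (G \<zeta>)) (at \<zeta>)" for \<zeta>
    by (auto intro!: derivative_eq_intros G)
qed simp

text \<open>Cramer's rule expresses the columns of \<open>Z\<close> through those of \<open>Y\<close> with Wronskian
  quotients as coefficients, and these are constant by Liouville's formula.\<close>

lemma matrix_ode_solution_eq_mult_const:
  fixes P :: "complex \<Rightarrow> complex^2^2" and Z :: "complex \<Rightarrow> complex^'m^2"
  assumes Y: "matrix_ode_solution P Y" and Y0: "\<And>\<zeta>. det (Y \<zeta>) \<noteq> 0"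
    and Z: "matrix_ode_solution P Z"
  shows "\<exists>K. \<forall>\<zeta>. Z \<zeta> = Y \<zeta> ** K"
proof -
  have detY: "((\<lambda>t. det (Y t)) has_field_derivative trace (P \<zeta>) * det (Y \<zeta>)) (at \<zeta>)" for \<zeta>
    unfolding det_eq_wronskian_columns by (rule wronskian_columns_deriv[OF Y Y])
  have "\<forall>j. \<exists>c. \<forall>\<zeta>. wronskian (column j (Z \<zeta>)) (column 2 (Y \<zeta>)) = c * det (Y \<zeta>)"
    by (intro allI proportional_if_same_linear_ode[where a = "\<lambda>\<zeta>. trace (P \<zeta>)"] wronskian_columns_deriv[OF Z Y] detY Y0)
  then obtain c1 where c1: "\<And>j \<zeta>. wronskian (column j (Z \<zeta>)) (column 2 (Y \<zeta>)) = c1 j * det (Y \<zeta>)"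
    by metis
  have "\<forall>j. \<exists>c. \<forall>\<zeta>. wronskian (column 1 (Y \<zeta>)) (column j (Z \<zeta>)) = c * det (Y \<zeta>)"
    by (intro allI proportional_if_same_linear_ode[where a = "\<lambda>\<zeta>. trace (P \<zeta>)"] wronskian_columns_deriv[OF Y Z] detY Y0)
  then obtain c2 where c2: "\<And>j \<zeta>. wronskian (column 1 (Y \<zeta>)) (column j (Z \<zeta>)) = c2 j * det (Y \<zeta>)"
    by metis
  define K :: "complex^'m^2" where "K = (\<chi> k j. if k = 1 then c1 j else c2 j)"
  have "Z \<zeta> $ i $ j = (Y \<zeta> ** K) $ i $ j" for \<zeta> i j
  proof -
    have "det (Y \<zeta>) * Z \<zeta> $ i $ j
        = c1 j * det (Y \<zeta>) * Y \<zeta> $ i $ 1 + c2 j * det (Y \<zeta>) * Y \<zeta> $ i $ 2"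
      using arg_cong[OF wronskian_cramer[of "column 1 (Y \<zeta>)" "column 2 (Y \<zeta>)" "column j (Z \<zeta>)"],
          of "\<lambda>v. v $ i"]
      by (simp add: c1 c2 flip: det_eq_wronskian_columns) (simp add: column_def)
    then have "det (Y \<zeta>) * (Z \<zeta> $ i $ j - (c1 j * Y \<zeta> $ i $ 1 + c2 j * Y \<zeta> $ i $ 2)) = 0"
      by (simp add: algebra_simps)
    then have "Z \<zeta> $ i $ j = c1 j * Y \<zeta> $ i $ 1 + c2 j * Y \<zeta> $ i $ 2"
      using Y0[of \<zeta>] by simp
    then show ?thesis
      by (simp add: K_def matrix_matrix_mult_def sum_2)
  qed
  then show ?thesis
    by (auto simp: vec_eq_iff)
qed

text \<open>\<open>M\<close> is similar to \<open>N\<inverse>\<close>, and \<open>tr N\<inverse> = tr N / det N\<close> for \<open>2\<times>2\<close> matrices.\<close>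

lemma trace_eq_det_mult_trace_if_mult_fixes:
  fixes M K N :: "'a::field^2^2"
  assumes "M ** K ** N = K" and "det K \<noteq> 0"
  shows "trace M = det M * trace N"
proof -
  have entry: "K $ i $ j = (M ** K ** N) $ i $ j" for i j
    using assms(1) by simp
  have "det K * (det M * trace N - trace M) = 0"
    using entry[of 1 1] entry[of 1 2] entry[of 2 1] entry[of 2 2]
    unfolding det_2 trace_def sum_2 matrix_matrix_mult_def vec_lambda_beta
    by algebra
  then show ?thesis
    using assms(2) by simp
qed

lemma left_cancel_det_nonzero:
  fixes A :: "'a::field^'n^'n"
  assumes "A ** B = A ** C" and "det A \<noteq> 0"
  shows "B = C"
proof -
  obtain A' where "A' ** A = mat 1"
    using assms(2) invertible_det_nz invertible_left_inverse by blast
  then show ?thesis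
    by (metis assms(1) matrix_mul_assoc matrix_mul_lid)
qed

lemma trace_monodromy_reflection_symmetric:
  fixes P :: "complex \<Rightarrow> complex^2^2" and C :: "complex^2^2"
  assumes Y: "matrix_ode_solution P Y" and Y0: "\<And>\<zeta>. det (Y \<zeta>) \<noteq> 0"
    and C: "C ** C = mat 1" and sym: "\<And>\<zeta>. C ** cnj_matrix (P (cnj \<zeta>)) ** C = P \<zeta>"
    and mono: "\<And>\<zeta>. Y (\<zeta> + p) = Y \<zeta> ** M" and p: "cnj p = - p"
  shows "trace M = det M * cnj (trace M)"
proof -
  define Z where "Z \<zeta> = C ** cnj_matrix (Y (cnj \<zeta>))" for \<zeta>
  obtain K where K: "\<And>\<zeta>. Z \<zeta> = Y \<zeta> ** K"
    using matrix_ode_solution_eq_mult_const[OF Y Y0 matrix_ode_solution_reflect[OF Y C sym]]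
    unfolding Z_def by blast
  have "Y 0 ** K = Y 0 ** (M ** K ** cnj_matrix M)"
  proof -
    have "Z 0 = Z p ** cnj_matrix M"
      using reflect_monodromy[of Y p M C 0, OF mono p] by (simp add: Z_def)
    then have "Y 0 ** K = Y p ** K ** cnj_matrix M"
      by (simp only: K)
    also have "\<dots> = Y 0 ** (M ** K ** cnj_matrix M)"
      using mono[of 0] by (simp add: K matrix_mul_assoc)
    finally show ?thesis .
  qed
  then have K_fixed: "M ** K ** cnj_matrix M = K"
    using left_cancel_det_nonzero Y0 by metis
  have "det C \<noteq> 0"
    using C by (metis det_I det_mul mult_zero_left zero_neq_one)
  have "det (Y 0) * det K = det (Z 0)"
    by (simp add: K det_mul)
  also have "\<dots> = det C * cnj (det (Y 0))"
    by (simp add: Z_def det_mul det_cnj_matrix)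
  finally have "det K \<noteq> 0"
    using Y0[of 0] \<open>det C \<noteq> 0\<close> by auto
  from trace_eq_det_mult_trace_if_mult_fixes[OF K_fixed this]
  show ?thesis
    by (simp add: trace_cnj_matrix)
qed

definition Lmat_log :: "real \<Rightarrow> real \<Rightarrow> real \<Rightarrow> complex \<Rightarrow> complex^2^2" where
  "Lmat_log \<omega> l \<mu> \<zeta> =
     vector [vector [- (of_real l + of_real \<mu> * (exp \<zeta> + exp (- \<zeta>))), 1 / (2 * \<i> * of_real \<omega>)],
             vector [1 / (2 * \<i> * of_real \<omega>), 0]]"

definition sign_flip :: "complex^2^2" where
  "sign_flip = vector [vector [1, 0], vector [0, -1]]"

lemma exp_mult_Lmat_mult:
  "exp \<zeta> * (Lmat \<omega> l \<mu> (exp \<zeta>) ** X) $ i $ j = (Lmat_log \<omega> l \<mu> \<zeta> ** X) $ i $ j"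
proof -
  have "exp \<zeta> \<noteq> 0"
    by simp
  then show ?thesis
    using exhaust_2[of i]
    by (auto simp: Lmat_def Lmat_log_def matrix_matrix_mult_def sum_2 exp_minus
        field_simps power2_eq_square)
qed

lemma fundamental_solution_L_iff:
  "fundamental_solution_L \<omega> l \<mu> Y \<longleftrightarrow>
     matrix_ode_solution (Lmat_log \<omega> l \<mu>) Y \<and> (\<forall>\<zeta>. det (Y \<zeta>) \<noteq> 0)"
  by (simp add: fundamental_solution_L_def matrix_ode_solution_def exp_mult_Lmat_mult)

lemma sign_flip_mult_sign_flip: "sign_flip ** sign_flip = mat 1"
  by (simp add: sign_flip_def matrix_matrix_mult_def sum_2 vec_eq_iff forall_2 mat_def)

lemma sign_flip_cnj_Lmat_log:
  "sign_flip ** cnj_matrix (Lmat_log \<omega> l \<mu> (cnj \<zeta>)) ** sign_flip = Lmat_log \<omega> l \<mu> \<zeta>"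
  by (simp add: sign_flip_def Lmat_log_def cnj_matrix_def matrix_matrix_mult_def sum_2
      vec_eq_iff forall_2 exp_cnj)

lemma trace_Lmat_log_antiderivative:
  "((\<lambda>\<zeta>. - (of_real l * \<zeta> + of_real \<mu> * (exp \<zeta> - exp (- \<zeta>))))
     has_field_derivative trace (Lmat_log \<omega> l \<mu> \<zeta>)) (at \<zeta>)"
  by (auto intro!: derivative_eq_intros simp: Lmat_log_def trace_def sum_2 algebra_simps)

lemma det_monodromy_L:
  assumes "is_monodromy_L \<omega> l \<mu> Y M"
  shows "det M = exp (- (2 * of_real pi * \<i> * of_real l))"
proof -
  define p :: complex where "p = 2 * of_real pi * \<i>"
  have Y: "matrix_ode_solution (Lmat_log \<omega> l \<mu>) Y" "det (Y 0) \<noteq> 0"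
    using assms by (auto simp: is_monodromy_L_def fundamental_solution_L_iff)
  have mono: "Y p = Y 0 ** M"
    using assms unfolding is_monodromy_L_def p_def by (metis add_0)
  obtain c where c: "\<And>\<zeta>. det (Y \<zeta>) = c * exp (- (of_real l * \<zeta> + of_real \<mu> * (exp \<zeta> - exp (- \<zeta>))))"
    using matrix_ode_det_exp[OF Y(1) trace_Lmat_log_antiderivative] by blast
  have "exp p = 1"
    by (simp add: p_def)
  then have "det (Y 0) * det M = det (Y 0) * exp (- (of_real l * p))"
    using c[of 0] c[of p] mono by (simp add: det_mul exp_minus)
  then show ?thesis
    using Y(2) by (simp add: p_def mult_ac)
qed

lemma trace_monodromy_L:
  assumes "is_monodromy_L \<omega> l \<mu> Y M"
  shows "trace M = det M * cnj (trace M)"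
proof (rule trace_monodromy_reflection_symmetric[where C = sign_flip])
  show "matrix_ode_solution (Lmat_log \<omega> l \<mu>) Y" "\<And>\<zeta>. det (Y \<zeta>) \<noteq> 0"
    and "\<And>\<zeta>. Y (\<zeta> + 2 * of_real pi * \<i>) = Y \<zeta> ** M"
    using assms by (auto simp: is_monodromy_L_def fundamental_solution_L_iff)
qed (simp_all add: sign_flip_mult_sign_flip sign_flip_cnj_Lmat_log)

lemma trace_normalized_monodromy_L_real:
  assumes "is_monodromy_L \<omega> l \<mu> Y M"
  shows "trace (normalized_monodromy l M) \<in> \<real>"
proof -
  define w :: complex where "w = of_real pi * \<i> * of_real l"
  have cnj_trace: "cnj (trace M) = exp (2 * w) * trace M"
    using trace_monodromy_L[OF assms] det_monodromy_L[OF assms]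
    by (simp add: w_def exp_minus field_simps)
  have "cnj (exp w * trace M) = exp (- w) * exp (2 * w) * trace M"
    by (simp add: exp_cnj cnj_trace w_def)
  also have "\<dots> = exp w * trace M"
    by (simp add: mult_exp_exp)
  finally have "cnj (exp w * trace M) = exp w * trace M" .
  moreover have "trace (normalized_monodromy l M) = exp w * trace M"
    by (simp add: normalized_monodromy_def w_def trace_def sum_2 matrix_matrix_mult_def mat_def
        distrib_left)
  ultimately show ?thesis
    by (simp add: Reals_cnj_iff)
qed

theorem mainTheorem9:
  fixes \<omega> A B :: real and Y :: "complex \<Rightarrow> complex^2^2" and M :: "complex^2^2"
  assumes "\<omega> > 0" and "A \<noteq> 0" and "B / \<omega> \<ge> 0" and "A / (2 * \<omega>) > 0"
    and "is_monodromy_L \<omega> (B / \<omega>) (A / (2 * \<omega>)) Y M"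
  shows "trace (normalized_monodromy (B / \<omega>) M) \<in> \<real>"
  using trace_normalized_monodromy_L_real[OF assms(5)] .

end
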